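(* Let $n$ items have positive integer sizes $w_1\le w_2\le\dots\le w_n$, with total size $W=\sum_{i=1}^n w_i$, and let there be $m$ bins, bin $j$ having positive integer capacity $C_j$, fixed cost $f_j\ge 0$ and unit cost $c_j\ge 0$, where $\sum_{j=1}^m C_j\ge W$. For each bin set $r_j=f_j/C_j+c_j$, let $a_1,\dots,a_m$ be a permutation of $\{1,\dots,m\}$ with $r_{a_1}\le r_{a_2}\le\dots\le r_{a_m}$, and let $k$ be the minimum integer such that $\sum_{j=1}^{k}C_{a_j}\ge W$. Define $$Lb_1=\sum_{j=1}^{k-1}C_{a_j}r_{a_j}+\Big(W-\sum_{j=1}^{k-1}C_{a_j}\Big)r_{a_k}.$$ Then $Lb_1$ equals the optimal value of the linear program $$\min \sum_{j=1}^m (f_jy_j+c_jl_j)$$ subject to $\sum_{j=1}^m x_{ij}=1$ for all $i\in\{1,\dots,n\}$; $\sum_{i=1}^n w_ix_{ij}=l_j$ for all $j\in\{1,\dots,m\}$; $l_j\le C_jy_j$ for all $j$; $0\le x_{ij}\le 1$, $0\le y_j\le 1$, $l_j\ge 0$ for all $i,j$.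
   Context: This linear program is the linear relaxation of an integer program for the Bin Packing with Usage Cost problem, in which each item is assigned to exactly one bin, the load $l_j$ of bin $j$ (total size of its items) may not exceed $C_j$, and a used bin $j$ costs $f_j+c_jl_j$; $y_j$ indicates whether bin $j$ is used and $x_{ij}$ whether item $i$ is in bin $j$. *)

theory Defs
  imports "HOL-Analysis.Analysis"
begin

definition ratio :: "(nat \<Rightarrow> nat) \<Rightarrow> (nat \<Rightarrow> real) \<Rightarrow> (nat \<Rightarrow> real) \<Rightarrow> nat \<Rightarrow> real" where
  "ratio C f c j = f j / real (C j) + c j"

definition total_size :: "nat \<Rightarrow> (nat \<Rightarrow> nat) \<Rightarrow> nat" where
  "total_size n w = (\<Sum>i=1..n. w i)"

definition kmin :: "nat \<Rightarrow> (nat \<Rightarrow> nat) \<Rightarrow> (nat \<Rightarrow> nat) \<Rightarrow> nat" where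
  "kmin W C a = (LEAST k. (\<Sum>j=1..k. C (a j)) \<ge> W)"

definition Lb1 :: "nat \<Rightarrow> (nat \<Rightarrow> nat) \<Rightarrow> (nat \<Rightarrow> nat) \<Rightarrow> (nat \<Rightarrow> real) \<Rightarrow> (nat \<Rightarrow> real)
                   \<Rightarrow> (nat \<Rightarrow> nat) \<Rightarrow> real" where
  "Lb1 n w C f c a =
     (let W = total_size n w; k = kmin W C a; r = ratio C f c in
        (\<Sum>j=1..k-1. real (C (a j)) * r (a j))
        + (real W - (\<Sum>j=1..k-1. real (C (a j)))) * r (a k))"

definition lp_feasible :: "nat \<Rightarrow> nat \<Rightarrow> (nat \<Rightarrow> nat) \<Rightarrow> (nat \<Rightarrow> nat)
     \<Rightarrow> (nat \<Rightarrow> nat \<Rightarrow> real) \<Rightarrow> (nat \<Rightarrow> real) \<Rightarrow> (nat \<Rightarrow> real) \<Rightarrow> bool" where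
  "lp_feasible n m w C x y l \<longleftrightarrow>
     (\<forall>i\<in>{1..n}. (\<Sum>j=1..m. x i j) = 1) \<and>
     (\<forall>j\<in>{1..m}. (\<Sum>i=1..n. real (w i) * x i j) = l j) \<and>
     (\<forall>j\<in>{1..m}. l j \<le> real (C j) * y j) \<and>
     (\<forall>i\<in>{1..n}. \<forall>j\<in>{1..m}. 0 \<le> x i j \<and> x i j \<le> 1) \<and>
     (\<forall>j\<in>{1..m}. 0 \<le> y j \<and> y j \<le> 1 \<and> 0 \<le> l j)"

definition lp_objective :: "nat \<Rightarrow> (nat \<Rightarrow> real) \<Rightarrow> (nat \<Rightarrow> real)
     \<Rightarrow> (nat \<Rightarrow> real) \<Rightarrow> (nat \<Rightarrow> real) \<Rightarrow> real" where
  "lp_objective m f c y l = (\<Sum>j=1..m. f j * y j + c j * l j)"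

definition lp_optimal_value :: "nat \<Rightarrow> nat \<Rightarrow> (nat \<Rightarrow> nat) \<Rightarrow> (nat \<Rightarrow> nat)
     \<Rightarrow> (nat \<Rightarrow> real) \<Rightarrow> (nat \<Rightarrow> real) \<Rightarrow> real \<Rightarrow> bool" where
  "lp_optimal_value n m w C f c v \<longleftrightarrow>
     (\<exists>x y l. lp_feasible n m w C x y l \<and> lp_objective m f c y l = v) \<and>
     (\<forall>x y l. lp_feasible n m w C x y l \<longrightarrow> v \<le> lp_objective m f c y l)"

end

theory Submission
  imports Defs
begin

text \<open>Since l_j \<le> C_j y_j, the cost of bin j is at least r_j l_j, with equality for y_j = l_j / C_j;
  and every load vector with 0 \<le> l_j \<le> C_j and total W comes from a feasible x (split every item
  proportionally to the loads). So the LP has the value of the fractional knapsack problem of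
  minimising \<Sum> r_j l_j over such loads. Filling the bins greedily in order of increasing ratio
  solves it: against any feasible load, the greedy one has at least as much load on the bins
  cheaper than the critical bin a_k and at most as much on the dearer ones.\<close>

definition load_feasible :: "nat \<Rightarrow> (nat \<Rightarrow> real) \<Rightarrow> real \<Rightarrow> (nat \<Rightarrow> real) \<Rightarrow> bool" where
  "load_feasible m cap W l \<longleftrightarrow> (\<forall>j\<in>{1..m}. 0 \<le> l j \<and> l j \<le> cap j) \<and> (\<Sum>j=1..m. l j) = W"

definition knapsack_optimal_value ::
    "nat \<Rightarrow> (nat \<Rightarrow> real) \<Rightarrow> (nat \<Rightarrow> real) \<Rightarrow> real \<Rightarrow> real \<Rightarrow> bool" where
  "knapsack_optimal_value m cap r W v \<longleftrightarrow>
     (\<exists>l. load_feasible m cap W l \<and> (\<Sum>j=1..m. r j * l j) = v) \<and>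
     (\<forall>l. load_feasible m cap W l \<longrightarrow> v \<le> (\<Sum>j=1..m. r j * l j))"

lemma lp_feasible_load_feasible:
  assumes "lp_feasible n m w C x y l"
  shows "load_feasible m (\<lambda>j. real (C j)) (real (total_size n w)) l"
proof -
  have "(\<Sum>j=1..m. l j) = (\<Sum>j=1..m. \<Sum>i=1..n. real (w i) * x i j)"
    using assms unfolding lp_feasible_def by (intro sum.cong) auto
  also have "\<dots> = (\<Sum>i=1..n. real (w i) * (\<Sum>j=1..m. x i j))"
    by (subst sum.swap) (simp add: sum_distrib_left)
  also have "\<dots> = real (total_size n w)"
    using assms unfolding lp_feasible_def total_size_def by simp
  finally have "(\<Sum>j=1..m. l j) = real (total_size n w)" .
  moreover have "l j \<le> real (C j)" if "j \<in> {1..m}" for j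
  proof -
    have "l j \<le> real (C j) * y j" "y j \<le> 1"
      using assms that unfolding lp_feasible_def by auto
    then show ?thesis using mult_left_le[of "y j" "real (C j)"] by simp
  qed
  ultimately show ?thesis
    using assms unfolding lp_feasible_def load_feasible_def by auto
qed

lemma ratio_mult_load_le_cost:
  assumes "0 < C j" "0 \<le> f j" "l \<le> real (C j) * y"
  shows "ratio C f c j * l \<le> f j * y + c j * l"
proof -
  have "f j / real (C j) * l \<le> f j / real (C j) * (real (C j) * y)"
    using assms by (intro mult_left_mono) auto
  then show ?thesis
    using assms(1) unfolding ratio_def by (simp add: algebra_simps)
qed

lemma ratio_load_le_lp_objective:
  assumes "\<forall>j\<in>{1..m}. 0 < C j" "\<forall>j\<in>{1..m}. 0 \<le> f j" "lp_feasible n m w C x y l"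
  shows "(\<Sum>j=1..m. ratio C f c j * l j) \<le> lp_objective m f c y l"
  unfolding lp_objective_def
  using assms by (intro sum_mono ratio_mult_load_le_cost) (auto simp: lp_feasible_def)

lemma lp_feasible_proportional:
  assumes w_pos: "\<forall>i\<in>{1..n}. 0 < w i" and C_pos: "\<forall>j\<in>{1..m}. 0 < C j"
    and l: "load_feasible m (\<lambda>j. real (C j)) (real (total_size n w)) l"
  shows "lp_feasible n m w C (\<lambda>i j. l j / real (total_size n w)) (\<lambda>j. l j / real (C j)) l"
proof -
  define W where "W = real (total_size n w)"
  have W_pos: "0 < W" if "i \<in> {1..n}" for i
  proof -
    have "real (w i) \<le> W"
      unfolding W_def total_size_def of_nat_sum using that by (intro member_le_sum) auto
    then show ?thesis using w_pos that by fastforce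
  qed
  have l_le_W: "l j \<le> W" if "j \<in> {1..m}" for j
  proof -
    have "l j \<le> (\<Sum>j=1..m. l j)"
      using l that unfolding load_feasible_def by (intro member_le_sum) auto
    then show ?thesis using l unfolding load_feasible_def W_def by simp
  qed
  have l_nonneg: "0 \<le> l j" if "j \<in> {1..m}" for j
    using l that unfolding load_feasible_def by auto
  show ?thesis
    unfolding lp_feasible_def W_def[symmetric]
  proof (intro conjI ballI)
    fix i assume "i \<in> {1..n}"
    then show "(\<Sum>j=1..m. l j / W) = 1"
      using l W_pos by (simp add: load_feasible_def W_def sum_divide_distrib[symmetric])
  next
    fix j assume j: "j \<in> {1..m}"
    have "(\<Sum>i=1..n. real (w i) * (l j / W)) = W * (l j / W)"
      unfolding sum_distrib_right[symmetric] W_def total_size_def by simp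
    also have "\<dots> = l j"
      using l_nonneg[OF j] l_le_W[OF j] by (cases "W = 0") auto
    finally show "(\<Sum>i=1..n. real (w i) * (l j / W)) = l j" .
    show "l j \<le> real (C j) * (l j / real (C j))" "0 \<le> l j / real (C j)" "l j / real (C j) \<le> 1"
      "0 \<le> l j"
      using C_pos l j by (auto simp: load_feasible_def)
  next
    fix i j assume "i \<in> {1..n}" "j \<in> {1..m}"
    then show "0 \<le> l j / W" "l j / W \<le> 1"
      using l_nonneg l_le_W W_pos by (auto intro: divide_nonneg_pos)
  qed
qed

lemma lp_objective_proportional:
  assumes "\<forall>j\<in>{1..m}. 0 < C j"
  shows "lp_objective m f c (\<lambda>j. l j / real (C j)) l = (\<Sum>j=1..m. ratio C f c j * l j)"
  unfolding lp_objective_def ratio_def using assms by (intro sum.cong) (auto simp: field_simps)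

lemma lp_optimal_value_of_knapsack:
  assumes "\<forall>i\<in>{1..n}. 0 < w i" "\<forall>j\<in>{1..m}. 0 < C j" "\<forall>j\<in>{1..m}. 0 \<le> f j"
    and "knapsack_optimal_value m (\<lambda>j. real (C j)) (ratio C f c) (real (total_size n w)) v"
  shows "lp_optimal_value n m w C f c v"
proof -
  obtain l where l: "load_feasible m (\<lambda>j. real (C j)) (real (total_size n w)) l"
    and l_cost: "(\<Sum>j=1..m. ratio C f c j * l j) = v"
    using assms(4) unfolding knapsack_optimal_value_def by blast
  have "lp_feasible n m w C (\<lambda>i j. l j / real (total_size n w)) (\<lambda>j. l j / real (C j)) l"
    using lp_feasible_proportional[OF assms(1,2) l] .
  moreover have "lp_objective m f c (\<lambda>j. l j / real (C j)) l = v"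
    using lp_objective_proportional[OF assms(2)] l_cost by simp
  moreover have "v \<le> lp_objective m f c y l'" if "lp_feasible n m w C x y l'" for x y l'
    using assms(4) lp_feasible_load_feasible[OF that] ratio_load_le_lp_objective[OF assms(2,3) that, where c = c]
    unfolding knapsack_optimal_value_def by fastforce
  ultimately show ?thesis unfolding lp_optimal_value_def by blast
qed

definition greedy_load :: "(nat \<Rightarrow> real) \<Rightarrow> nat \<Rightarrow> real \<Rightarrow> nat \<Rightarrow> real" where
  "greedy_load cap k W t = (if t < k then cap t else if t = k then W - (\<Sum>s=1..k-1. cap s) else 0)"

lemma sum_if_less_atLeastAtMost:
  fixes g :: "nat \<Rightarrow> 'a::comm_monoid_add"
  assumes "k \<le> Suc m"
  shows "(\<Sum>t=1..m. if t < k then g t else 0) = (\<Sum>t=1..k-1. g t)"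
proof -
  have "(\<Sum>t=1..m. if t < k then g t else 0) = (\<Sum>t\<in>{1..m} \<inter> {t. t < k}. g t)"
    by (simp add: sum.inter_restrict)
  also have "{1..m} \<inter> {t. t < k} = {1..k-1}" using assms by auto
  finally show ?thesis .
qed

lemma sum_weighted_greedy_load:
  assumes "1 \<le> k" "k \<le> m"
  shows "(\<Sum>t=1..m. \<rho> t * greedy_load cap k W t)
           = (\<Sum>t=1..k-1. cap t * \<rho> t) + (W - (\<Sum>t=1..k-1. cap t)) * \<rho> k"
proof -
  have "(\<Sum>t=1..m. \<rho> t * greedy_load cap k W t)
      = (\<Sum>t=1..m. if t < k then cap t * \<rho> t else 0)
        + (\<Sum>t=1..m. if t = k then (W - (\<Sum>t=1..k-1. cap t)) * \<rho> k else 0)"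
    unfolding sum.distrib[symmetric] greedy_load_def by (intro sum.cong) auto
  then show ?thesis
    using assms sum_if_less_atLeastAtMost[of k m "\<lambda>t. cap t * \<rho> t"] by simp
qed

lemma sum_greedy_load:
  assumes "1 \<le> k" "k \<le> m"
  shows "(\<Sum>t=1..m. greedy_load cap k W t) = W"
  using sum_weighted_greedy_load[OF assms, where \<rho> = "\<lambda>_. 1"] by simp

lemma load_feasible_greedy_load:
  assumes "\<forall>t\<in>{1..m}. 0 \<le> cap t" "1 \<le> k" "k \<le> m"
    and "(\<Sum>t=1..k-1. cap t) \<le> W" "W \<le> (\<Sum>t=1..k-1. cap t) + cap k"
  shows "load_feasible m cap W (greedy_load cap k W)"
  using assms sum_greedy_load[OF assms(2,3)]
  unfolding load_feasible_def greedy_load_def by auto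

lemma sum_weighted_greedy_load_le:
  assumes "1 \<le> k" "k \<le> m"
    and mono: "\<forall>t\<in>{1..m}. \<forall>t'\<in>{1..m}. t \<le> t' \<longrightarrow> \<rho> t \<le> \<rho> t'"
    and l: "load_feasible m cap W l"
  shows "(\<Sum>t=1..m. \<rho> t * greedy_load cap k W t) \<le> (\<Sum>t=1..m. \<rho> t * l t)"
proof -
  let ?g = "greedy_load cap k W"
  \<comment> \<open>Below the critical bin k the greedy load is full, above it empty.\<close>
  have "0 \<le> (\<rho> t - \<rho> k) * (l t - ?g t)" if t: "t \<in> {1..m}" for t
  proof (cases t k rule: linorder_cases)
    case less
    then show ?thesis
      using mono t assms(1,2) l unfolding load_feasible_def greedy_load_def
      by (intro mult_nonpos_nonpos) auto
  next
    case greater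
    then show ?thesis
      using mono t assms(1,2) l unfolding load_feasible_def greedy_load_def
      by (intro mult_nonneg_nonneg) auto
  qed simp
  then have "0 \<le> (\<Sum>t=1..m. (\<rho> t - \<rho> k) * (l t - ?g t))"
    by (intro sum_nonneg) auto
  also have "\<dots> = (\<Sum>t=1..m. \<rho> t * l t - \<rho> t * ?g t - \<rho> k * (l t - ?g t))"
    by (simp add: algebra_simps)
  also have "\<dots> = (\<Sum>t=1..m. \<rho> t * l t) - (\<Sum>t=1..m. \<rho> t * ?g t)
                   - \<rho> k * ((\<Sum>t=1..m. l t) - (\<Sum>t=1..m. ?g t))"
    by (simp add: sum_subtractf sum_distrib_left[symmetric])
  also have "(\<Sum>t=1..m. l t) - (\<Sum>t=1..m. ?g t) = 0"
    using l sum_greedy_load[OF assms(1,2)] unfolding load_feasible_def by simp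
  finally show ?thesis by simp
qed

lemma knapsack_optimal_value_greedy:
  assumes "\<forall>t\<in>{1..m}. 0 \<le> cap t" "1 \<le> k" "k \<le> m"
    and "(\<Sum>t=1..k-1. cap t) \<le> W" "W \<le> (\<Sum>t=1..k-1. cap t) + cap k"
    and "\<forall>t\<in>{1..m}. \<forall>t'\<in>{1..m}. t \<le> t' \<longrightarrow> \<rho> t \<le> \<rho> t'"
  shows "knapsack_optimal_value m cap \<rho> W
           ((\<Sum>t=1..k-1. cap t * \<rho> t) + (W - (\<Sum>t=1..k-1. cap t)) * \<rho> k)"
  unfolding knapsack_optimal_value_def sum_weighted_greedy_load[OF assms(2,3), symmetric]
  using load_feasible_greedy_load[OF assms(1-5)] sum_weighted_greedy_load_le[OF assms(2,3,6)]
  by blast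

lemma knapsack_optimal_value_zero:
  assumes "\<forall>j\<in>{1..m}. 0 \<le> cap j"
  shows "knapsack_optimal_value m cap r 0 0"
proof -
  have "(\<Sum>j=1..m. r j * l j) = 0" if "load_feasible m cap 0 l" for l
  proof -
    have "\<forall>j\<in>{1..m}. l j = 0"
      using that sum_nonneg_eq_0_iff[of "{1..m}" l] unfolding load_feasible_def by auto
    then show ?thesis by simp
  qed
  moreover have "load_feasible m cap 0 (\<lambda>_. 0)"
    using assms unfolding load_feasible_def by simp
  ultimately show ?thesis
    unfolding knapsack_optimal_value_def by fastforce
qed

lemma knapsack_optimal_value_reindex:
  assumes a: "bij_betw a {1..m} {1..m}"
    and opt: "knapsack_optimal_value m (\<lambda>t. cap (a t)) (\<lambda>t. r (a t)) W v"
  shows "knapsack_optimal_value m cap r W v"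
proof -
  have reindex: "(\<Sum>t=1..m. g (a t)) = (\<Sum>j=1..m. g j)" for g :: "nat \<Rightarrow> real"
    using sum.reindex_bij_betw[OF a] .
  have ball_reindex: "(\<forall>t\<in>{1..m}. P (a t)) \<longleftrightarrow> (\<forall>j\<in>{1..m}. P j)" for P
    using bij_betw_imp_surj_on[OF a] by (metis image_eqI imageE)
  have feasible_iff: "load_feasible m (\<lambda>t. cap (a t)) W (\<lambda>t. l (a t)) \<longleftrightarrow> load_feasible m cap W l"
    for l
    unfolding load_feasible_def ball_reindex[of "\<lambda>j. 0 \<le> l j \<and> l j \<le> cap j"] reindex ..
  obtain L where L: "load_feasible m (\<lambda>t. cap (a t)) W L" and L_cost: "(\<Sum>t=1..m. r (a t) * L t) = v"
    using opt unfolding knapsack_optimal_value_def by blast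
  define l where "l = L \<circ> inv_into {1..m} a"
  have l_a: "l (a t) = L t" if "t \<in> {1..m}" for t
    using bij_betw_inv_into_left[OF a that] unfolding l_def by simp
  have "load_feasible m (\<lambda>t. cap (a t)) W (\<lambda>t. l (a t))"
  proof -
    have "(\<Sum>t=1..m. l (a t)) = (\<Sum>t=1..m. L t)" using l_a by (intro sum.cong) auto
    then show ?thesis using L l_a unfolding load_feasible_def by simp
  qed
  moreover have "(\<Sum>j=1..m. r j * l j) = v"
  proof -
    have "(\<Sum>t=1..m. r (a t) * l (a t)) = (\<Sum>t=1..m. r (a t) * L t)"
      using l_a by (intro sum.cong) auto
    then show ?thesis using L_cost reindex[of "\<lambda>j. r j * l j"] by simp
  qed
  moreover have "v \<le> (\<Sum>j=1..m. r j * l' j)" if "load_feasible m cap W l'" for l'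
    using opt that feasible_iff[of l'] reindex[of "\<lambda>j. r j * l' j"]
    unfolding knapsack_optimal_value_def by auto
  ultimately show ?thesis
    unfolding knapsack_optimal_value_def feasible_iff by blast
qed

lemma kmin_bounds:
  fixes W :: nat and C a :: "nat \<Rightarrow> nat"
  assumes "0 < W" "W \<le> (\<Sum>j=1..m. C (a j))"
  shows "1 \<le> kmin W C a" "kmin W C a \<le> m"
    and "(\<Sum>j=1..kmin W C a - 1. C (a j)) < W"
    and "W \<le> (\<Sum>j=1..kmin W C a - 1. C (a j)) + C (a (kmin W C a))"
proof -
  have upper: "W \<le> (\<Sum>j=1..kmin W C a. C (a j))"
    unfolding kmin_def by (rule LeastI) (rule assms(2))
  show "kmin W C a \<le> m"
    unfolding kmin_def by (rule Least_le) (rule assms(2))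
  show k_pos: "1 \<le> kmin W C a"
    using upper assms(1) by (cases "kmin W C a") auto
  then show "W \<le> (\<Sum>j=1..kmin W C a - 1. C (a j)) + C (a (kmin W C a))"
    using upper by (cases "kmin W C a") (auto simp: sum.cl_ivl_Suc)
  from k_pos have "\<not> W \<le> (\<Sum>j=1..kmin W C a - 1. C (a j))"
    unfolding kmin_def by (intro not_less_Least) auto
  then show "(\<Sum>j=1..kmin W C a - 1. C (a j)) < W" by simp
qed

theorem proposition2:
  fixes n m :: nat
    and w C :: "nat \<Rightarrow> nat"
    and f c :: "nat \<Rightarrow> real"
    and a :: "nat \<Rightarrow> nat"
  assumes w_pos: "\<forall>i\<in>{1..n}. 0 < w i"
    and w_sorted: "\<forall>i\<in>{1..n}. \<forall>i'\<in>{1..n}. i \<le> i' \<longrightarrow> w i \<le> w i'"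
    and C_pos: "\<forall>j\<in>{1..m}. 0 < C j"
    and f_nonneg: "\<forall>j\<in>{1..m}. 0 \<le> f j"
    and c_nonneg: "\<forall>j\<in>{1..m}. 0 \<le> c j"
    and cap: "(\<Sum>j=1..m. C j) \<ge> total_size n w"
    and a_perm: "bij_betw a {1..m} {1..m}"
    and a_sorted: "\<forall>j\<in>{1..m}. \<forall>j'\<in>{1..m}. j \<le> j' \<longrightarrow> ratio C f c (a j) \<le> ratio C f c (a j')"
  shows "lp_optimal_value n m w C f c (Lb1 n w C f c a)"
proof -
  define W where "W = total_size n w"
  define k where "k = kmin W C a"
  have "knapsack_optimal_value m (\<lambda>j. real (C j)) (ratio C f c) (real W) (Lb1 n w C f c a)"
  proof (cases "W = 0")
    case True
    then have "Lb1 n w C f c a = 0"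
      unfolding Lb1_def kmin_def W_def[symmetric] by simp
    then show ?thesis
      using True knapsack_optimal_value_zero by simp
  next
    case False
    have W_le: "W \<le> (\<Sum>j=1..m. C (a j))"
      using cap sum.reindex_bij_betw[OF a_perm, of C] unfolding W_def by simp
    note k_bounds = kmin_bounds[where W = W and m = m and C = C and a = a, OF _ W_le, folded k_def]
    have "knapsack_optimal_value m (\<lambda>t. real (C (a t))) (\<lambda>t. ratio C f c (a t)) (real W)
            (Lb1 n w C f c a)"
      unfolding Lb1_def Let_def W_def[symmetric] k_def[symmetric]
      using False k_bounds a_sorted
      by (intro knapsack_optimal_value_greedy) (auto simp flip: of_nat_sum of_nat_add)
    then show ?thesis
      by (rule knapsack_optimal_value_reindex[OF a_perm])
  qed
  then show ?thesis
    using lp_optimal_value_of_knapsack[OF w_pos C_pos f_nonneg] unfolding W_def by blast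
qed

end
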